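(* Under the standing setup (in either Scenario I or Scenario II), assume $0<h<\frac{1}{d_{\max}}$ and that the expected graph is strongly connected. Then the system $x(t_{k+1})=(I-hL_{\sigma_k})^{\bar k}x(t_k)$ reaches consensus in probability: for every $x(0)\in\mathbb{R}^n$ and every $\varepsilon>0$, $\lim_{k\to\infty}P\{M(t_k)-m(t_k)\ge\varepsilon\}=0$, where $M(t_k)=\max_i x_i(t_k)$ and $m(t_k)=\min_i x_i(t_k)$. The same conclusion holds for the limiting system $x(t_{k+1})=e^{-L_{\sigma_k}\Delta}x(t_k)$.
   Context: Standing setup. $n\ge3$ agents. $G$ is an undirected connected graph on $\{1,\dots,n\}$ with symmetric $0/1$ adjacency matrix $A=[a_{ij}]$ (zero diagonal), degrees $d_i=\sum_j a_{ij}$, $d_{\max}=\max_i d_i$, and Laplacian $L=\mathrm{diag}(d_1,\dots,d_n)-A$, with entries $l_{ij}$. For a (possibly directed) $0/1$ adjacency matrix $B$ ($b_{ij}=1$ meaning agent $i$ receives from agent $j$), its Laplacian is $\mathrm{diag}(B\mathbf{1})-B$. Scenario I (agents 1,2 may fail to receive): $A_1$ is $A$ with row 1 set to zero, $A_2$ is $A$ with row 2 set to zero, $A_3$ is $A$ with rows 1 and 2 set to zero, $A_4=A$. Scenario II (agents 1,2 may fail to send): same with columns instead of rows. $L_i$ is the Laplacian of $A_i$ (so $L_4=L$). Probabilities $p_1=\alpha,p_2=\beta,p_3=\gamma,p_4=\theta\in(0,1)$ with $\alpha+\beta+\gamma+\theta=1$. The expected graph is the directed graph with weighted adjacency matrix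 $\sum_{i=1}^4 p_iA_i$. Sampling period $h>0$, integer $\bar k\ge1$, $\Delta=\bar k h$, $t_k=k\Delta$. $\sigma_0,\sigma_1,\dots$ are i.i.d. random variables in $\{1,2,3,4\}$ with $P(\sigma_k=i)=p_i$ (the graph is held fixed on each interval of length $\Delta$, during which the delta-operator system $\delta x=-L_{\sigma_k}x$ with step $h$ is run $\bar k$ times). The initial state $x(t_0)=x(0)\in\mathbb{R}^n$ is deterministic. $\mathbf{1}$ is the all-ones column vector. *)

theory Defs
  imports "HOL-Probability.Probability"
begin

(* Agents are indexed by a finite type 'n (n = CARD('n)); vectors are real^'n,
   matrices real^'n^'n. *)

primrec mpow :: "real^'n^'n \<Rightarrow> nat \<Rightarrow> real^'n^'n" where
  "mpow A 0 = mat 1"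
| "mpow A (Suc m) = A ** mpow A m"

definition mexp :: "real^'n^'n \<Rightarrow> real^'n^'n" where
  "mexp A = (\<chi> i j. \<Sum>m. (mpow A m) $ i $ j / fact m)"

definition lap :: "real^'n^'n \<Rightarrow> real^'n^'n" where
  "lap B = (\<chi> i j. (if i = j then (\<Sum>k\<in>UNIV. B $ i $ k) else 0) - B $ i $ j)"

definition degree :: "real^'n^'n \<Rightarrow> 'n \<Rightarrow> real" where
  "degree A i = (\<Sum>j\<in>UNIV. A $ i $ j)"

definition dmax :: "real^'n^'n \<Rightarrow> real" where
  "dmax A = Max (range (degree A))"

definition simple_graph_adj :: "real^'n^'n \<Rightarrow> bool" where
  "simple_graph_adj A \<longleftrightarrow> (\<forall>i j. A $ i $ j = 0 \<or> A $ i $ j = 1) \<and>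
     (\<forall>i j. A $ i $ j = A $ j $ i) \<and> (\<forall>i. A $ i $ i = 0)"

(* W $ i $ j > 0 means i receives from j, i.e. a directed edge j -> i;
   strong connectivity does not depend on this orientation convention. *)
definition strongly_connected :: "real^'n^'n \<Rightarrow> bool" where
  "strongly_connected W \<longleftrightarrow> (\<forall>i j. (\<lambda>a b. W $ b $ a > 0)\<^sup>*\<^sup>* i j)"

definition connected_graph :: "real^'n^'n \<Rightarrow> bool" where
  "connected_graph A \<longleftrightarrow> strongly_connected A"

datatype scenario = ScenarioI | ScenarioII

definition zero_lines :: "scenario \<Rightarrow> 'n set \<Rightarrow> real^'n^'n \<Rightarrow> real^'n^'n" where
  "zero_lines sc S A = (\<chi> i j. if (sc = ScenarioI \<and> i \<in> S) \<or> (sc = ScenarioII \<and> j \<in> S)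
                                then 0 else A $ i $ j)"

(* the four topologies A_1..A_4; a1, a2 are the two distinguished agents "1" and "2" *)
definition topo :: "scenario \<Rightarrow> 'n \<Rightarrow> 'n \<Rightarrow> real^'n^'n \<Rightarrow> nat \<Rightarrow> real^'n^'n" where
  "topo sc a1 a2 A i =
     (if i = 1 then zero_lines sc {a1} A
      else if i = 2 then zero_lines sc {a2} A
      else if i = 3 then zero_lines sc {a1, a2} A
      else A)"

definition expected_graph :: "scenario \<Rightarrow> 'n \<Rightarrow> 'n \<Rightarrow> real^'n^'n \<Rightarrow> (nat \<Rightarrow> real) \<Rightarrow> real^'n^'n" where
  "expected_graph sc a1 a2 A p = (\<Sum>i\<in>{1..4}. p i *\<^sub>R topo sc a1 a2 A i)"

primrec traj :: "(nat \<Rightarrow> real^'n^'n) \<Rightarrow> real^'n \<Rightarrow> (nat \<Rightarrow> nat) \<Rightarrow> nat \<Rightarrow> real^'n" where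
  "traj F x0 s 0 = x0"
| "traj F x0 s (Suc k) = F (s k) *v traj F x0 s k"

definition spread :: "real^'n \<Rightarrow> real" where
  "spread x = Max (range (\<lambda>i. x $ i)) - Min (range (\<lambda>i. x $ i))"

end

theory Submission
  imports Defs
begin

text \<open>
  For \<open>0 < h < 1/d_max\<close> every matrix \<open>I - h L_i\<close>, and every \<open>exp (- \<Delta> L_i)\<close>, is row
  stochastic, so the spread \<open>M - m\<close> never increases along a trajectory.  For the fault-free
  topology \<open>L_4 = L\<close> of the connected graph some power of the one-interval transition matrix
  is entrywise positive, and a stochastic matrix whose entries are all at least \<open>\<eta> > 0\<close>
  contracts the spread by the factor \<open>1 - \<eta>\<close>.  Hence a long enough run of consecutive
  intervals with \<open>\<sigma>_k = 4\<close> brings the spread below \<open>\<epsilon>\<close>.  Cutting time into disjoint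
  blocks of that length, independence makes the probability that no block is such a run decay
  geometrically in the number of blocks.
\<close>

section \<open>Stochastic matrices and the spread\<close>

definition stochastic :: "real^'n^'n \<Rightarrow> bool" where
  "stochastic P \<longleftrightarrow> (\<forall>i j. 0 \<le> P$i$j) \<and> (\<forall>i. (\<Sum>j\<in>UNIV. P$i$j) = 1)"

lemma mpow_add: "mpow A (m + k) = mpow A m ** mpow A k"
  by (induction m) (auto simp: matrix_mul_assoc matrix_mul_lid)

lemma mpow_mult: "mpow (mpow A k) m = mpow A (k * m)"
  by (induction m) (auto simp: mpow_add[symmetric])

lemma row_sum_matrix_mul:
  fixes X Y :: "real^'n^'n"
  assumes "\<And>i. (\<Sum>j\<in>UNIV. X$i$j) = r" and "\<And>i. (\<Sum>j\<in>UNIV. Y$i$j) = s"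
  shows "(\<Sum>j\<in>UNIV. (X ** Y)$i$j) = r * s"
proof -
  have "(\<Sum>j\<in>UNIV. (X ** Y)$i$j) = (\<Sum>k\<in>UNIV. X$i$k * (\<Sum>j\<in>UNIV. Y$k$j))"
    by (simp add: matrix_matrix_mult_def sum_distrib_left) (rule sum.swap)
  then show ?thesis
    using assms by (simp add: sum_distrib_right[symmetric])
qed

lemma row_sum_mpow:
  fixes X :: "real^'n^'n"
  assumes "\<And>i. (\<Sum>j\<in>UNIV. X$i$j) = r"
  shows "(\<Sum>j\<in>UNIV. mpow X m $i$j) = r ^ m"
proof (induction m arbitrary: i)
  case 0
  show ?case by (simp add: mat_def)
next
  case (Suc m)
  show ?case using row_sum_matrix_mul[OF assms Suc.IH] by simp
qed

lemma matrix_mul_entry_ge: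
  fixes X Y :: "real^'n^'n"
  assumes "\<forall>i j. 0 \<le> X$i$j" and "\<forall>i j. 0 \<le> Y$i$j"
  shows "X$i$k * Y$k$j \<le> (X ** Y)$i$j"
  using assms by (simp add: matrix_matrix_mult_def member_le_sum[where f="\<lambda>k. X$i$k * Y$k$j"])

lemma mpow_nonneg:
  fixes X :: "real^'n^'n"
  assumes "\<forall>i j. 0 \<le> X$i$j"
  shows "0 \<le> mpow X m $i$j"
proof (induction m arbitrary: i j)
  case 0
  show ?case by (simp add: mat_def)
next
  case (Suc m)
  show ?case using assms Suc.IH by (simp add: matrix_matrix_mult_def sum_nonneg)
qed

lemma stochastic_mpow: "stochastic P \<Longrightarrow> stochastic (mpow P m)"
  unfolding stochastic_def using mpow_nonneg row_sum_mpow[of P 1] by auto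

lemma stochastic_entry_le_1:
  assumes "stochastic P" shows "P$i$j \<le> 1"
proof -
  have "P$i$j \<le> (\<Sum>k\<in>UNIV. P$i$k)"
    using assms by (intro member_le_sum) (auto simp: stochastic_def)
  then show ?thesis using assms by (simp add: stochastic_def)
qed

definition max_entry :: "real^'n \<Rightarrow> real" where
  "max_entry x = Max (range (\<lambda>i. x$i))"

definition min_entry :: "real^'n \<Rightarrow> real" where
  "min_entry x = Min (range (\<lambda>i. x$i))"

lemma spread_eq_max_entry_minus_min_entry: "spread x = max_entry x - min_entry x"
  by (simp add: spread_def max_entry_def min_entry_def)

lemma max_entry_le_iff: "max_entry x \<le> c \<longleftrightarrow> (\<forall>i. x$i \<le> c)"
  by (simp add: max_entry_def)

lemma le_min_entry_iff: "c \<le> min_entry x \<longleftrightarrow> (\<forall>i. c \<le> x$i)"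
  by (simp add: min_entry_def)

lemma entry_le_max_entry: "x$i \<le> max_entry x"
  by (simp add: max_entry_def)

lemma min_entry_le_entry: "min_entry x \<le> x$i"
  by (simp add: min_entry_def)

lemma max_entry_attained: "\<exists>i. max_entry x = x$i"
proof -
  have "max_entry x \<in> range (\<lambda>i. x$i)"
    unfolding max_entry_def by (rule Max_in) auto
  then show ?thesis by auto
qed

lemma min_entry_attained: "\<exists>i. min_entry x = x$i"
proof -
  have "min_entry x \<in> range (\<lambda>i. x$i)"
    unfolding min_entry_def by (rule Min_in) auto
  then show ?thesis by auto
qed

lemma spread_nonneg: "0 \<le> spread x"
  using entry_le_max_entry[of x] min_entry_le_entry[of x]
  by (simp add: spread_eq_max_entry_minus_min_entry) (meson order.trans)

lemma stochastic_mult_vec_le: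
  assumes "stochastic P" and "\<And>i j. \<eta> \<le> P$i$j"
  shows "(P *v x)$i \<le> max_entry x - \<eta> * spread x"
proof -
  obtain k where k: "min_entry x = x$k" using min_entry_attained by blast
  have "(P *v x)$i = max_entry x - (\<Sum>j\<in>UNIV. P$i$j * (max_entry x - x$j))"
    using assms(1)
    by (simp add: stochastic_def matrix_vector_mult_def right_diff_distrib sum_subtractf
                  sum_distrib_right[symmetric])
  moreover have "P$i$k * (max_entry x - x$k) \<le> (\<Sum>j\<in>UNIV. P$i$j * (max_entry x - x$j))"
    using assms(1) by (intro member_le_sum) (auto simp: stochastic_def entry_le_max_entry)
  moreover have "\<eta> * spread x \<le> P$i$k * (max_entry x - x$k)"
    using assms(2) k spread_nonneg[of x]
    by (simp add: spread_eq_max_entry_minus_min_entry mult_right_mono)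
  ultimately show ?thesis by linarith
qed

lemma stochastic_mult_vec_ge:
  assumes "stochastic P" and "\<And>i j. \<eta> \<le> P$i$j"
  shows "min_entry x + \<eta> * spread x \<le> (P *v x)$i"
proof -
  obtain k where k: "max_entry x = x$k" using max_entry_attained by blast
  have "(P *v x)$i = min_entry x + (\<Sum>j\<in>UNIV. P$i$j * (x$j - min_entry x))"
    using assms(1)
    by (simp add: stochastic_def matrix_vector_mult_def right_diff_distrib sum_subtractf
                  sum_distrib_right[symmetric])
  moreover have "P$i$k * (x$k - min_entry x) \<le> (\<Sum>j\<in>UNIV. P$i$j * (x$j - min_entry x))"
    using assms(1) by (intro member_le_sum) (auto simp: stochastic_def min_entry_le_entry)
  moreover have "\<eta> * spread x \<le> P$i$k * (x$k - min_entry x)"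
    using assms(2) k spread_nonneg[of x]
    by (simp add: spread_eq_max_entry_minus_min_entry mult_right_mono)
  ultimately show ?thesis by linarith
qed

lemma spread_stochastic_contraction:
  assumes "stochastic P" and "\<And>i j. \<eta> \<le> P$i$j"
  shows "spread (P *v x) \<le> (1 - 2 * \<eta>) * spread x"
proof -
  have "max_entry (P *v x) \<le> max_entry x - \<eta> * spread x"
    using stochastic_mult_vec_le[OF assms] by (simp add: max_entry_le_iff)
  moreover have "min_entry x + \<eta> * spread x \<le> min_entry (P *v x)"
    using stochastic_mult_vec_ge[OF assms] by (simp add: le_min_entry_iff)
  ultimately show ?thesis
    by (simp add: spread_eq_max_entry_minus_min_entry algebra_simps)
qed

corollary spread_stochastic_le: "stochastic P \<Longrightarrow> spread (P *v x) \<le> spread x"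
  using spread_stochastic_contraction[of P 0] by (simp add: stochastic_def)

lemma spread_mpow_le:
  assumes "\<And>x. spread (P *v x) \<le> \<rho> * spread x" and "0 \<le> \<rho>"
  shows "spread (mpow P m *v x) \<le> \<rho> ^ m * spread x"
proof (induction m)
  case 0
  show ?case by (simp add: matrix_vector_mul_lid)
next
  case (Suc m)
  have "spread (mpow P (Suc m) *v x) \<le> \<rho> * spread (mpow P m *v x)"
    using assms(1) by (simp add: matrix_vector_mul_assoc[symmetric])
  also have "\<dots> \<le> \<rho> * (\<rho> ^ m * spread x)"
    by (rule mult_left_mono[OF Suc.IH assms(2)])
  finally show ?case by (simp add: mult.assoc)
qed

lemma stochastic_positive_power_mixing:
  assumes "stochastic P" and "\<forall>i j. 0 < mpow P N $i$j"
  obtains \<rho> where "0 \<le> \<rho>" and "\<rho> < 1" and "\<And>m x. spread (mpow P (N * m) *v x) \<le> \<rho> ^ m * spread x"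
proof -
  let ?Q = "mpow P N"
  define \<eta> where "\<eta> = Min (range (\<lambda>(i, j). ?Q$i$j))"
  have \<eta>_le: "\<eta> \<le> ?Q$i$j" for i j
    unfolding \<eta>_def by (rule Min_le) (auto intro: range_eqI[of _ _ "(i, j)"])
  have "\<eta> \<in> range (\<lambda>(i, j). ?Q$i$j)"
    unfolding \<eta>_def by (rule Min_in) auto
  then have "0 < \<eta>" using assms(2) by auto
  have stoch_Q: "stochastic ?Q" using assms(1) by (rule stochastic_mpow)
  then have "\<eta> \<le> 1" using \<eta>_le stochastic_entry_le_1 order.trans by metis
  have "spread (?Q *v x) \<le> (1 - \<eta>) * spread x" for x
  proof -
    have "spread (?Q *v x) \<le> (1 - 2 * \<eta>) * spread x"
      by (rule spread_stochastic_contraction[OF stoch_Q \<eta>_le])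
    also have "\<dots> \<le> (1 - \<eta>) * spread x"
      using \<open>0 < \<eta>\<close> spread_nonneg[of x] by (intro mult_right_mono) auto
    finally show ?thesis .
  qed
  then have mixing: "spread (mpow P (N * m) *v x) \<le> (1 - \<eta>) ^ m * spread x" for m x
    using spread_mpow_le[of ?Q "1 - \<eta>" m x] \<open>\<eta> \<le> 1\<close> by (simp add: mpow_mult)
  have "0 \<le> 1 - \<eta>" "1 - \<eta> < 1" using \<open>0 < \<eta>\<close> \<open>\<eta> \<le> 1\<close> by auto
  then show ?thesis using that[OF _ _ mixing] by blast
qed

section \<open>Eventually positive powers\<close>

lemma mpow_Suc_entry_pos:
  fixes Y :: "real^'n^'n"
  assumes "\<forall>i j. 0 \<le> Y$i$j" and "0 < Y$b$a" and "0 < mpow Y N $a$j"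
  shows "0 < mpow Y (Suc N) $b$j"
proof -
  have "Y$b$a * mpow Y N $a$j \<le> (Y ** mpow Y N)$b$j"
    using assms(1) mpow_nonneg[OF assms(1)] by (intro matrix_mul_entry_ge) auto
  moreover have "0 < Y$b$a * mpow Y N $a$j" using assms(2,3) by simp
  ultimately show ?thesis by simp
qed

text \<open>Positivity of an entry spreads along one edge of \<open>W\<close> per power, and the positive
  diagonal keeps it alive in all later powers.\<close>

lemma eventually_mpow_positive:
  fixes Y W :: "real^'n^'n"
  assumes nonneg: "\<forall>i j. 0 \<le> Y$i$j" and diag: "\<And>i. 0 < Y$i$i"
    and edges: "\<And>a b. 0 < W$b$a \<Longrightarrow> 0 < Y$b$a" and "strongly_connected W"
  shows "\<forall>\<^sub>F N in sequentially. \<forall>i j. 0 < mpow Y N $i$j"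
proof -
  have "\<forall>\<^sub>F N in sequentially. 0 < mpow Y N $i$j"
    if "(\<lambda>a b. 0 < W$b$a)\<^sup>*\<^sup>* j i" for i j
    using that
  proof (induction rule: rtranclp_induct)
    case base
    have "0 < mpow Y N $j$j" for N
    proof (induction N)
      case 0
      show ?case by (simp add: mat_def)
    next
      case (Suc N)
      show ?case by (rule mpow_Suc_entry_pos[OF nonneg diag Suc.IH])
    qed
    then show ?case by simp
  next
    case (step a b)
    then obtain N0 where "\<forall>N\<ge>N0. 0 < mpow Y N $a$j"
      by (auto simp: eventually_sequentially)
    then have "\<forall>N\<ge>Suc N0. 0 < mpow Y N $b$j"
      using mpow_Suc_entry_pos[OF nonneg edges[OF step(2)]] by (metis Suc_le_D Suc_le_mono)
    then show ?case by (auto simp: eventually_sequentially)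
  qed
  then show ?thesis
    using \<open>strongly_connected W\<close> unfolding strongly_connected_def
    by (intro eventually_all_finite) auto
qed

section \<open>The matrix exponential\<close>

lemma binomial_sum_Suc:
  fixes z :: "nat \<Rightarrow> real"
  shows "(\<Sum>k\<le>Suc m. real (Suc m choose k) * s^(Suc m - k) * z k)
       = (\<Sum>k\<le>m. real (m choose k) * s^(m - k) * z (Suc k)) + s * (\<Sum>k\<le>m. real (m choose k) * s^(m - k) * z k)"
proof -
  have "s * (\<Sum>k\<le>m. real (m choose k) * s^(m - k) * z k)
      = (\<Sum>k\<le>m. real (m choose k) * s^(Suc m - k) * z k)"
    unfolding sum_distrib_left by (intro sum.cong refl) (simp add: Suc_diff_le)
  also have "\<dots> = (\<Sum>k\<le>Suc m. real (m choose k) * s^(Suc m - k) * z k)"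
    by simp
  also have "\<dots> = s^Suc m * z 0 + (\<Sum>k\<le>m. real (m choose Suc k) * s^(m - k) * z (Suc k))"
    by (subst sum.atMost_Suc_shift) simp
  finally show ?thesis
    by (subst sum.atMost_Suc_shift) (simp add: ring_distribs sum.distrib)
qed

lemma mpow_add_scaled_identity:
  fixes Z :: "real^'n^'n"
  shows "mpow (Z + s *\<^sub>R mat 1) m $i$j = (\<Sum>k\<le>m. real (m choose k) * s^(m - k) * mpow Z k $i$j)"
proof (induction m arbitrary: i j)
  case 0
  show ?case by simp
next
  case (Suc m)
  let ?Q = "mpow (Z + s *\<^sub>R mat 1) m"
  let ?c = "\<lambda>k. real (m choose k) * s^(m - k)"
  have "(\<Sum>l\<in>UNIV. (if i = l then s else 0) * ?Q$l$j) = (\<Sum>l\<in>UNIV. if i = l then s * ?Q$l$j else 0)"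
    by (intro sum.cong refl) simp
  then have diag: "(\<Sum>l\<in>UNIV. (if i = l then s else 0) * ?Q$l$j) = s * ?Q$i$j"
    by simp
  have "mpow (Z + s *\<^sub>R mat 1) (Suc m) $i$j = (\<Sum>l\<in>UNIV. (Z$i$l + (if i = l then s else 0)) * ?Q$l$j)"
    by (simp add: matrix_matrix_mult_def, intro sum.cong refl) (simp add: mat_def)
  also have "\<dots> = (\<Sum>l\<in>UNIV. Z$i$l * ?Q$l$j) + s * ?Q$i$j"
    unfolding distrib_right sum.distrib diag ..
  also have "(\<Sum>l\<in>UNIV. Z$i$l * ?Q$l$j) = (\<Sum>k\<le>m. ?c k * mpow Z (Suc k) $i$j)"
    unfolding Suc.IH
    by (simp add: matrix_matrix_mult_def sum_distrib_left mult_ac)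
       (rule sum.swap)
  also have "\<dots> + s * ?Q$i$j = (\<Sum>k\<le>Suc m. real (Suc m choose k) * s^(Suc m - k) * mpow Z k $i$j)"
    using binomial_sum_Suc[of m s "\<lambda>k. mpow Z k $i$j"] by (simp add: Suc.IH mult.assoc)
  finally show ?case .
qed

lemma abs_mpow_entry_le:
  fixes Z :: "real^'n^'n"
  defines "R \<equiv> \<Sum>i\<in>UNIV. \<Sum>k\<in>UNIV. \<bar>Z$i$k\<bar>"
  shows "\<bar>mpow Z m $i$j\<bar> \<le> R ^ m"
proof (induction m arbitrary: i j)
  case 0
  show ?case by (simp add: mat_def)
next
  case (Suc m)
  have R: "0 \<le> R" "(\<Sum>k\<in>UNIV. \<bar>Z$i$k\<bar>) \<le> R"
    unfolding R_def
    by (auto intro!: sum_nonneg member_le_sum[where f="\<lambda>i. \<Sum>k\<in>UNIV. \<bar>Z$i$k\<bar>"])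
  have "\<bar>mpow Z (Suc m) $i$j\<bar> \<le> (\<Sum>k\<in>UNIV. \<bar>Z$i$k\<bar> * \<bar>mpow Z m $k$j\<bar>)"
    by (simp add: matrix_matrix_mult_def abs_mult[symmetric] sum_abs)
  also have "\<dots> \<le> (\<Sum>k\<in>UNIV. \<bar>Z$i$k\<bar>) * R ^ m"
    unfolding sum_distrib_right by (intro sum_mono mult_left_mono Suc.IH) auto
  also have "\<dots> \<le> R ^ Suc m"
    using R by (simp add: mult_right_mono)
  finally show ?case .
qed

lemma summable_mexp_series:
  fixes Z :: "real^'n^'n"
  shows "summable (\<lambda>m. \<bar>mpow Z m $i$j / fact m\<bar>)"
proof (rule summable_comparison_test'[OF summable_exp])
  fix m
  show "norm \<bar>mpow Z m $i$j / fact m\<bar> \<le> inverse (fact m) * (\<Sum>i\<in>UNIV. \<Sum>k\<in>UNIV. \<bar>Z$i$k\<bar>) ^ m"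
    using abs_mpow_entry_le[of Z m i j] by (simp add: divide_simps abs_divide)
qed

lemma mexp_add_scaled_identity:
  fixes Z :: "real^'n^'n"
  shows "mexp (Z + s *\<^sub>R mat 1) $i$j = exp s * mexp Z $i$j"
proof -
  define a where "a k = mpow Z k $i$j / fact k" for k
  define b where "b l = s^l / fact l" for l
  have "summable (\<lambda>k. norm (a k))" unfolding a_def using summable_mexp_series by simp
  moreover have "summable (\<lambda>k. norm (b k))" unfolding b_def
    using summable_exp[of "\<bar>s\<bar>"] by (simp add: abs_divide abs_mult power_abs divide_inverse mult.commute)
  moreover have "mexp (Z + s *\<^sub>R mat 1) $i$j = (\<Sum>m. \<Sum>k\<le>m. a k * b (m - k))"
  proof -
    have "real (m choose k) * s^(m - k) * mpow Z k $i$j / fact m = a k * b (m - k)"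
      if "k \<le> m" for k m
    proof -
      have "real (m choose k) = fact m / (fact k * fact (m - k))"
        using binomial_fact[OF that] by simp
      then show ?thesis by (simp add: a_def b_def field_simps)
    qed
    then show ?thesis
      by (simp add: mexp_def mpow_add_scaled_identity sum_divide_distrib)
  qed
  ultimately have "mexp (Z + s *\<^sub>R mat 1) $i$j = (\<Sum>k. a k) * (\<Sum>l. b l)"
    by (simp add: Cauchy_product)
  moreover have "(\<Sum>l. b l) = exp s"
    using exp_converges[of s] by (simp add: b_def sums_iff divide_inverse mult.commute)
  ultimately show ?thesis by (simp add: a_def mexp_def)
qed

lemma mpow_le_mexp:
  fixes Z :: "real^'n^'n"
  assumes "\<forall>i j. 0 \<le> Z$i$j"
  shows "mpow Z N $i$j / fact N \<le> mexp Z $i$j"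
proof -
  have "summable (\<lambda>m. mpow Z m $i$j / fact m)"
    using summable_mexp_series by (rule summable_rabs_cancel)
  then have "(\<Sum>m\<in>{N}. mpow Z m $i$j / fact m) \<le> (\<Sum>m. mpow Z m $i$j / fact m)"
    by (rule sum_le_suminf) (auto simp: mpow_nonneg[OF assms])
  then show ?thesis by (simp add: mexp_def)
qed

lemma mexp_nonneg:
  fixes Z :: "real^'n^'n"
  assumes "\<forall>i j. 0 \<le> Z$i$j"
  shows "0 \<le> mexp Z $i$j"
  using mpow_le_mexp[OF assms, of 0 i j] by (simp add: mat_def split: if_splits)

lemma mexp_row_sum:
  fixes X :: "real^'n^'n"
  assumes "\<And>i. (\<Sum>j\<in>UNIV. X$i$j) = r"
  shows "(\<Sum>j\<in>UNIV. mexp X $i$j) = exp r"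
proof -
  have "(\<Sum>j\<in>UNIV. mexp X $i$j) = (\<Sum>m. \<Sum>j\<in>UNIV. mpow X m $i$j / fact m)"
    unfolding mexp_def
    by (simp, rule suminf_sum[symmetric], rule summable_rabs_cancel[OF summable_mexp_series])
  also have "\<dots> = (\<Sum>m. r ^ m / fact m)"
    by (simp add: sum_divide_distrib[symmetric] row_sum_mpow[OF assms])
  also have "\<dots> = exp r"
    using exp_converges[of r] by (simp add: sums_iff divide_inverse mult.commute)
  finally show ?thesis .
qed

section \<open>Laplacians\<close>

lemma row_sum_lap: "(\<Sum>y\<in>UNIV. lap W $x$y) = 0"
  by (simp add: lap_def sum_subtractf)

lemma scaled_identity_minus_lap_entry:
  "(a *\<^sub>R mat 1 - b *\<^sub>R lap W)$x$y
     = (if x = y then a - b * ((\<Sum>k\<in>UNIV. W$x$k) - W$x$x) else b * W$x$y)"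
  by (simp add: lap_def mat_def)

lemma scaled_identity_minus_lap_nonneg:
  assumes "\<forall>i j. 0 \<le> W$i$j" and "0 \<le> b" and "\<And>x. b * (\<Sum>k\<in>UNIV. W$x$k) \<le> a"
  shows "\<forall>i j. 0 \<le> (a *\<^sub>R mat 1 - b *\<^sub>R lap W)$i$j"
proof (intro allI)
  fix x y
  have "b * ((\<Sum>k\<in>UNIV. W$x$k) - W$x$x) \<le> b * (\<Sum>k\<in>UNIV. W$x$k)"
    using assms(1,2) by (simp add: mult_left_mono)
  then show "0 \<le> (a *\<^sub>R mat 1 - b *\<^sub>R lap W)$x$y"
    unfolding scaled_identity_minus_lap_entry using assms(1,2) assms(3)[of x] by auto
qed

lemma scaled_identity_minus_lap_eventually_positive:
  assumes "\<forall>i j. 0 \<le> W$i$j" and "strongly_connected W" and "0 < b"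
    and "\<And>x. b * (\<Sum>k\<in>UNIV. W$x$k) < a"
  shows "\<forall>\<^sub>F N in sequentially. \<forall>i j. 0 < mpow (a *\<^sub>R mat 1 - b *\<^sub>R lap W) N $i$j"
proof -
  have nonneg: "\<forall>i j. 0 \<le> (a *\<^sub>R mat 1 - b *\<^sub>R lap W)$i$j"
    using assms by (intro scaled_identity_minus_lap_nonneg) (auto intro: less_imp_le)
  have diag: "0 < (a *\<^sub>R mat 1 - b *\<^sub>R lap W)$i$i" for i
  proof -
    have "b * ((\<Sum>k\<in>UNIV. W$i$k) - W$i$i) \<le> b * (\<Sum>k\<in>UNIV. W$i$k)"
      using assms(1,3) by (simp add: mult_left_mono)
    then show ?thesis unfolding scaled_identity_minus_lap_entry using assms(4)[of i] by simp
  qed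
  have edge: "0 < (a *\<^sub>R mat 1 - b *\<^sub>R lap W)$y$x" if "0 < W$y$x" for x y
    using diag[of y] that assms(3) unfolding scaled_identity_minus_lap_entry by auto
  show ?thesis by (rule eventually_mpow_positive[OF nonneg diag edge assms(2)])
qed

lemma stochastic_identity_minus_lap:
  assumes "\<forall>i j. 0 \<le> W$i$j" and "0 \<le> h" and "\<And>x. h * (\<Sum>k\<in>UNIV. W$x$k) \<le> 1"
  shows "stochastic (mat 1 - h *\<^sub>R lap W)"
proof -
  have "\<forall>i j. 0 \<le> (1 *\<^sub>R mat 1 - h *\<^sub>R lap W)$i$j"
    using assms by (rule scaled_identity_minus_lap_nonneg)
  moreover have "(\<Sum>y\<in>UNIV. (mat 1 - h *\<^sub>R lap W)$x$y) = 1" for x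
    using row_sum_lap[of W x] by (simp add: mat_def sum_subtractf sum_distrib_left[symmetric])
  ultimately show ?thesis by (simp add: stochastic_def)
qed

lemma mpow_identity_minus_lap_positive:
  assumes "\<forall>i j. 0 \<le> W$i$j" and "strongly_connected W" and "0 < h"
    and "\<And>x. h * (\<Sum>k\<in>UNIV. W$x$k) < 1" and "1 \<le> kbar"
  obtains N where "0 < N" and "\<forall>i j. 0 < mpow (mpow (mat 1 - h *\<^sub>R lap W) kbar) N $i$j"
proof -
  have "\<forall>\<^sub>F N in sequentially. \<forall>i j. 0 < mpow (1 *\<^sub>R mat 1 - h *\<^sub>R lap W) N $i$j"
    using assms(4) by (rule scaled_identity_minus_lap_eventually_positive[OF assms(1-3)])
  then obtain N0 where N0: "\<forall>N\<ge>N0. \<forall>i j. 0 < mpow (mat 1 - h *\<^sub>R lap W) N $i$j"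
    unfolding eventually_sequentially scaleR_one by blast
  have "Suc N0 \<le> kbar * Suc N0"
    using mult_le_mono1[OF assms(5), of "Suc N0"] by simp
  then have "\<forall>i j. 0 < mpow (mpow (mat 1 - h *\<^sub>R lap W) kbar) (Suc N0) $i$j"
    using N0 unfolding mpow_mult by simp
  then show ?thesis using that zero_less_Suc by blast
qed

lemma row_sum_le_total:
  fixes W :: "real^'n^'n"
  assumes "\<forall>i j. 0 \<le> W$i$j"
  shows "(\<Sum>k\<in>UNIV. W$x$k) \<le> (\<Sum>i\<in>UNIV. \<Sum>k\<in>UNIV. W$i$k)"
  using assms by (intro member_le_sum[where f="\<lambda>i. \<Sum>k\<in>UNIV. W$i$k"]) (auto intro: sum_nonneg)

text \<open>Shifting by a large multiple \<open>c\<close> of the identity makes the generator nonnegative,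
  and the shift only contributes the scalar factor \<open>exp (- \<tau> c)\<close>.\<close>

lemma mexp_neg_lap_eq:
  "mexp (- (\<tau> *\<^sub>R lap W)) $i$j = exp (- (\<tau> * c)) * mexp ((\<tau> * c) *\<^sub>R mat 1 - \<tau> *\<^sub>R lap W) $i$j"
proof -
  have "- (\<tau> *\<^sub>R lap W) = ((\<tau> * c) *\<^sub>R mat 1 - \<tau> *\<^sub>R lap W) + (- (\<tau> * c)) *\<^sub>R mat 1"
    by (simp add: vec_eq_iff algebra_simps)
  then show ?thesis by (simp only: mexp_add_scaled_identity)
qed

lemma stochastic_mexp_neg_lap:
  assumes "\<forall>i j. 0 \<le> W$i$j" and "0 \<le> \<tau>"
  shows "stochastic (mexp (- (\<tau> *\<^sub>R lap W)))"
proof -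
  define c where "c = (\<Sum>i\<in>UNIV. \<Sum>k\<in>UNIV. W$i$k)"
  have "\<forall>i j. 0 \<le> ((\<tau> * c) *\<^sub>R mat 1 - \<tau> *\<^sub>R lap W)$i$j"
    using assms row_sum_le_total[OF assms(1)]
    by (intro scaled_identity_minus_lap_nonneg) (auto simp: c_def intro: mult_left_mono)
  then have "0 \<le> mexp (- (\<tau> *\<^sub>R lap W)) $i$j" for i j
    by (simp add: mexp_neg_lap_eq[where c=c] mexp_nonneg)
  moreover have "(\<Sum>j\<in>UNIV. mexp (- (\<tau> *\<^sub>R lap W)) $i$j) = 1" for i
    using mexp_row_sum[of "- (\<tau> *\<^sub>R lap W)" 0] row_sum_lap[of W]
    by (simp add: sum_negf sum_distrib_left[symmetric])
  ultimately show ?thesis by (simp add: stochastic_def)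
qed

lemma mexp_neg_lap_positive:
  assumes "\<forall>i j. 0 \<le> W$i$j" and "strongly_connected W" and "0 < \<tau>"
  shows "0 < mexp (- (\<tau> *\<^sub>R lap W)) $i$j"
proof -
  define c where "c = (\<Sum>i\<in>UNIV. \<Sum>k\<in>UNIV. W$i$k) + 1"
  let ?Z = "(\<tau> * c) *\<^sub>R mat 1 - \<tau> *\<^sub>R lap W"
  have row: "\<tau> * (\<Sum>k\<in>UNIV. W$x$k) < \<tau> * c" for x
    using row_sum_le_total[OF assms(1), of x] assms(3) by (simp add: c_def)
  then have "\<forall>\<^sub>F N in sequentially. \<forall>i j. 0 < mpow ?Z N $i$j"
    using assms by (intro scaled_identity_minus_lap_eventually_positive) auto
  then obtain N where "0 < mpow ?Z N $i$j"
    by (auto simp: eventually_sequentially)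
  moreover have "mpow ?Z N $i$j / fact N \<le> mexp ?Z $i$j"
    using assms(1,3) row by (intro mpow_le_mexp scaled_identity_minus_lap_nonneg) (auto intro: less_imp_le)
  ultimately have "0 < mexp ?Z $i$j"
    by (meson divide_pos_pos fact_gt_zero order.strict_trans2)
  then show ?thesis by (simp add: mexp_neg_lap_eq[where c=c])
qed

section \<open>Consensus in probability for i.i.d. switching\<close>

lemma traj_const_block:
  assumes "\<forall>t\<in>{a..<a+T}. s t = c"
  shows "traj F x0 s (a + T) = mpow (F c) T *v traj F x0 s a"
  using assms
proof (induction T)
  case 0
  show ?case by (simp add: matrix_vector_mul_lid)
next
  case (Suc T)
  then show ?case by (simp add: matrix_vector_mul_assoc)
qed

lemma spread_traj_antimono:
  assumes "\<And>i. stochastic (F i)" and "a \<le> b"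
  shows "spread (traj F x0 s b) \<le> spread (traj F x0 s a)"
  using assms(2)
proof (induction b rule: dec_induct)
  case base
  show ?case by simp
next
  case (step m)
  then show ?case
    using spread_stochastic_le[OF assms(1), of "s m" "traj F x0 s m"] by simp
qed

lemma filterlim_div_sequentially:
  "0 < (T::nat) \<Longrightarrow> filterlim (\<lambda>k. k div T) sequentially sequentially"
  unfolding filterlim_at_top eventually_sequentially
proof (intro allI exI[of _ "_ * T"] impI allI)
  fix Z k
  assume "0 < T" and "Z * T \<le> k"
  then show "Z \<le> k div T"
    using div_le_mono[of "Z * T" k T] by simp
qed

lemma disjoint_family_blocks: "disjoint_family (\<lambda>j. {j*T..<j*T + (T::nat)})"
proof -
  have "{m*T..<m*T+T} \<inter> {n*T..<n*T+T} = {}" if "m < n" for m n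
  proof -
    have "m*T + T \<le> n*T"
      using mult_le_mono1[of "Suc m" n T] that by simp
    then show ?thesis by auto
  qed
  then show ?thesis
    unfolding disjoint_family_on_def by (metis Int_commute linorder_neqE_nat)
qed

lemma (in prob_space) indep_vars_const_on_blocks:
  assumes ind: "indep_vars (\<lambda>_. count_space UNIV) \<sigma> I"
    and disj: "disjoint_family_on K J" and sub: "\<And>j. j \<in> J \<Longrightarrow> K j \<subseteq> I"
    and fin: "\<And>j. j \<in> J \<Longrightarrow> finite (K j)"
  shows "indep_vars (\<lambda>_. count_space UNIV) (\<lambda>j \<omega>. \<forall>t\<in>K j. \<sigma> t \<omega> = c) J"
proof -
  have "indep_vars (\<lambda>j. PiM (K j) (\<lambda>_. count_space UNIV)) (\<lambda>j \<omega>. restrict (\<lambda>t. \<sigma> t \<omega>) (K j)) J"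
    using ind sub disj by (rule indep_vars_restrict)
  then have "indep_vars (\<lambda>_. count_space UNIV)
     (\<lambda>j \<omega>. (\<lambda>f. \<forall>t\<in>K j. f t = c) (restrict (\<lambda>t. \<sigma> t \<omega>) (K j))) J"
  proof (rule indep_vars_compose2)
    fix j
    assume "j \<in> J"
    show "(\<lambda>f. \<forall>t\<in>K j. f t = c) \<in> PiM (K j) (\<lambda>_. count_space UNIV) \<rightarrow>\<^sub>M count_space UNIV"
      by (intro pred_intros_finite(3) pred_count_space_const1 measurable_component_singleton fin[OF \<open>j \<in> J\<close>])
  qed
  moreover have "(\<lambda>j \<omega>. \<forall>t\<in>K j. restrict (\<lambda>t. \<sigma> t \<omega>) (K j) t = c) = (\<lambda>j \<omega>. \<forall>t\<in>K j. \<sigma> t \<omega> = c)"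
    by (intro ext) simp
  ultimately show ?thesis by simp
qed

lemma (in prob_space) prob_no_const_block:
  fixes \<sigma> :: "'i \<Rightarrow> 'a \<Rightarrow> 'b"
  assumes ind: "indep_vars (\<lambda>_. count_space UNIV) \<sigma> UNIV"
    and q: "\<And>t. prob {\<omega> \<in> space M. \<sigma> t \<omega> = c} = q"
    and disj: "disjoint_family_on K J" and "finite J"
    and fin: "\<And>j. j \<in> J \<Longrightarrow> finite (K j)" and ne: "\<And>j. j \<in> J \<Longrightarrow> K j \<noteq> {}"
  shows "prob {\<omega> \<in> space M. \<forall>j\<in>J. \<exists>t\<in>K j. \<sigma> t \<omega> \<noteq> c} = (\<Prod>j\<in>J. 1 - q ^ card (K j))"
proof -
  define G where "G = (\<lambda>j \<omega>. \<forall>t\<in>K j. \<sigma> t \<omega> = c)"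
  have indG: "indep_vars (\<lambda>_. count_space UNIV) G J"
    unfolding G_def by (rule indep_vars_const_on_blocks[OF ind disj _ fin]) auto
  have prob_G: "prob (G j -` {True} \<inter> space M) = q ^ card (K j)" if "j \<in> J" for j
  proof -
    have "G j -` {True} \<inter> space M = (\<Inter>t\<in>K j. \<sigma> t -` {c} \<inter> space M)"
      using ne[OF that] by (auto simp: G_def)
    also have "prob \<dots> = (\<Prod>t\<in>K j. prob (\<sigma> t -` {c} \<inter> space M))"
      using ne[OF that] fin[OF that] by (intro indep_varsD[OF ind]) auto
    also have "\<dots> = (\<Prod>t\<in>K j. q)"
    proof (rule prod.cong[OF refl])
      fix t
      have "\<sigma> t -` {c} \<inter> space M = {\<omega> \<in> space M. \<sigma> t \<omega> = c}" by blast
      then show "prob (\<sigma> t -` {c} \<inter> space M) = q" by (simp only: q)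
    qed
    finally show ?thesis by simp
  qed
  have prob_not_G: "prob (G j -` {False} \<inter> space M) = 1 - q ^ card (K j)" if "j \<in> J" for j
  proof -
    have "random_variable (count_space UNIV) (G j)"
      using indG that by (simp add: indep_vars_def)
    then have "G j -` {True} \<inter> space M \<in> events"
      by (rule measurable_sets) simp
    moreover have "G j -` {False} \<inter> space M = space M - (G j -` {True} \<inter> space M)"
      by blast
    ultimately show ?thesis by (simp add: prob_compl prob_G[OF that])
  qed
  show ?thesis
  proof (cases "J = {}")
    case True
    then show ?thesis by (simp add: prob_space)
  next
    case False
    have "{\<omega> \<in> space M. \<forall>j\<in>J. \<exists>t\<in>K j. \<sigma> t \<omega> \<noteq> c} = (\<Inter>j\<in>J. G j -` {False} \<inter> space M)"
      using False by (auto simp: G_def)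
    also have "prob \<dots> = (\<Prod>j\<in>J. prob (G j -` {False} \<inter> space M))"
      using False \<open>finite J\<close> by (intro indep_varsD[OF indG]) auto
    finally show ?thesis by (simp add: prob_not_G)
  qed
qed

lemma (in prob_space) consensus_in_probability:
  fixes \<sigma> :: "nat \<Rightarrow> 'a \<Rightarrow> nat" and F :: "nat \<Rightarrow> real^'n^'n"
  assumes ind: "indep_vars (\<lambda>_. count_space UNIV) \<sigma> UNIV"
    and q: "\<And>k. prob {\<omega> \<in> space M. \<sigma> k \<omega> = c} = q" and "0 < q"
    and stoch: "\<And>i. stochastic (F i)" and pos: "\<forall>i j. 0 < mpow (F c) N $i$j" and "0 < N"
    and "0 < \<epsilon>"
  shows "(\<lambda>k. prob {\<omega> \<in> space M. \<epsilon> \<le> spread (traj F x0 (\<lambda>j. \<sigma> j \<omega>) k)}) \<longlonglongrightarrow> 0"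
proof -
  obtain \<rho> where "0 \<le> \<rho>" "\<rho> < 1"
    and mixing: "\<And>m x. spread (mpow (F c) (N * m) *v x) \<le> \<rho> ^ m * spread x"
    using stochastic_positive_power_mixing[OF stoch pos] by blast
  have "(\<lambda>m. \<rho> ^ Suc m * spread x0) \<longlonglongrightarrow> 0"
    using \<open>0 \<le> \<rho>\<close> \<open>\<rho> < 1\<close>
    by (intro tendsto_mult_left_zero LIMSEQ_power_zero[THEN LIMSEQ_Suc]) simp
  then have "\<forall>\<^sub>F m in sequentially. \<rho> ^ Suc m * spread x0 < \<epsilon>"
    using \<open>0 < \<epsilon>\<close> by (rule order_tendstoD(2))
  then obtain m where m: "\<rho> ^ Suc m * spread x0 < \<epsilon>"
    unfolding eventually_sequentially by blast
  define T where "T = N * Suc m"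
  have "0 < T" using \<open>0 < N\<close> by (simp add: T_def)
  have small: "spread (traj F x0 s k) < \<epsilon>"
    if block: "\<forall>t\<in>{j*T..<j*T+T}. s t = c" and "j*T + T \<le> k" for s k j
  proof -
    have "spread (traj F x0 s k) \<le> spread (traj F x0 s (j*T + T))"
      using stoch that(2) by (rule spread_traj_antimono)
    also have "\<dots> = spread (mpow (F c) T *v traj F x0 s (j*T))"
      by (simp only: traj_const_block[OF block])
    also have "\<dots> \<le> \<rho> ^ Suc m * spread (traj F x0 s (j*T))"
      unfolding T_def by (rule mixing)
    also have "\<dots> \<le> \<rho> ^ Suc m * spread x0"
      using spread_traj_antimono[OF stoch, where a=0 and b="j*T"] \<open>0 \<le> \<rho>\<close>
      by (simp add: mult_left_mono)
    finally show ?thesis using m by linarith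
  qed
  have bound: "prob {\<omega> \<in> space M. \<epsilon> \<le> spread (traj F x0 (\<lambda>j. \<sigma> j \<omega>) k)} \<le> (1 - q^T) ^ (k div T)"
    for k
  proof -
    have unsettled: "\<exists>t\<in>{j*T..<j*T+T}. \<sigma> t \<omega> \<noteq> c"
      if "\<epsilon> \<le> spread (traj F x0 (\<lambda>j. \<sigma> j \<omega>) k)" and "j \<in> {..<k div T}" for \<omega> j
    proof -
      have "j*T + T \<le> k div T * T"
        using that(2) mult_le_mono1[of "Suc j" "k div T" T] by (simp add: add.commute)
      then have "j*T + T \<le> k"
        by (rule order.trans) simp
      show ?thesis
      proof (rule ccontr)
        assume "\<not> ?thesis"
        then have "\<forall>t\<in>{j*T..<j*T+T}. \<sigma> t \<omega> = c" by blast
        then have "spread (traj F x0 (\<lambda>j. \<sigma> j \<omega>) k) < \<epsilon>"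
          using \<open>j*T + T \<le> k\<close> by (rule small)
        then show False using that(1) by simp
      qed
    qed
    have "{\<omega> \<in> space M. \<epsilon> \<le> spread (traj F x0 (\<lambda>j. \<sigma> j \<omega>) k)}
        \<subseteq> {\<omega> \<in> space M. \<forall>j\<in>{..<k div T}. \<exists>t\<in>{j*T..<j*T+T}. \<sigma> t \<omega> \<noteq> c}"
    proof
      fix \<omega>
      assume "\<omega> \<in> {\<omega> \<in> space M. \<epsilon> \<le> spread (traj F x0 (\<lambda>j. \<sigma> j \<omega>) k)}"
      then show "\<omega> \<in> {\<omega> \<in> space M. \<forall>j\<in>{..<k div T}. \<exists>t\<in>{j*T..<j*T+T}. \<sigma> t \<omega> \<noteq> c}"
        using unsettled[of \<omega>] by blast
    qed
    moreover have [measurable]: "\<sigma> t \<in> M \<rightarrow>\<^sub>M count_space UNIV" for t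
      using ind by (simp add: indep_vars_def)
    then have "{\<omega> \<in> space M. \<forall>j\<in>{..<k div T}. \<exists>t\<in>{j*T..<j*T+T}. \<sigma> t \<omega> \<noteq> c} \<in> events"
      by measurable
    ultimately have "prob {\<omega> \<in> space M. \<epsilon> \<le> spread (traj F x0 (\<lambda>j. \<sigma> j \<omega>) k)}
        \<le> prob {\<omega> \<in> space M. \<forall>j\<in>{..<k div T}. \<exists>t\<in>{j*T..<j*T+T}. \<sigma> t \<omega> \<noteq> c}"
      by (rule finite_measure_mono)
    also have "\<dots> = (\<Prod>j\<in>{..<k div T}. 1 - q ^ card {j*T..<j*T+T})"
      using disjoint_family_on_mono[OF subset_UNIV disjoint_family_blocks] \<open>0 < T\<close>
      by (intro prob_no_const_block[OF ind q]) auto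
    finally show ?thesis by simp
  qed
  have "q \<le> 1"
    using prob_le_1[of "{\<omega> \<in> space M. \<sigma> 0 \<omega> = c}"] q[of 0] by simp
  then have "\<bar>1 - q^T\<bar> < 1"
    using \<open>0 < q\<close> by (simp add: power_le_one)
  then have lim: "(\<lambda>k. (1 - q^T) ^ (k div T)) \<longlonglongrightarrow> 0"
    by (intro filterlim_compose[OF LIMSEQ_power_zero filterlim_div_sequentially[OF \<open>0 < T\<close>]]) simp
  show ?thesis
    by (rule tendsto_sandwich[OF _ _ tendsto_const lim]) (auto simp: bound)
qed

section \<open>The fault scenarios\<close>

lemma simple_graph_adj_nonneg:
  assumes "simple_graph_adj A"
  shows "\<forall>x y. 0 \<le> A$x$y"
proof (intro allI)
  fix x y
  have "A$x$y = 0 \<or> A$x$y = 1" using assms by (simp add: simple_graph_adj_def)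
  then show "0 \<le> A$x$y" by auto
qed

lemma topo_entry_cases: "topo sc a1 a2 A i $x$y = 0 \<or> topo sc a1 a2 A i $x$y = A$x$y"
  by (auto simp: topo_def zero_lines_def)

lemma topo_nonneg:
  assumes "\<forall>x y. 0 \<le> A$x$y"
  shows "\<forall>x y. 0 \<le> topo sc a1 a2 A i $x$y"
proof (intro allI)
  fix x y
  show "0 \<le> topo sc a1 a2 A i $x$y"
    using topo_entry_cases[of sc a1 a2 A i x y] assms by auto
qed

lemma row_sum_topo_le_dmax:
  assumes "\<forall>x y. 0 \<le> A$x$y"
  shows "(\<Sum>k\<in>UNIV. topo sc a1 a2 A i $x$k) \<le> dmax A"
proof -
  have "(\<Sum>k\<in>UNIV. topo sc a1 a2 A i $x$k) \<le> (\<Sum>k\<in>UNIV. A$x$k)"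
  proof (rule sum_mono)
    fix k
    show "topo sc a1 a2 A i $x$k \<le> A$x$k"
      using topo_entry_cases[of sc a1 a2 A i x k] assms by auto
  qed
  also have "\<dots> \<le> dmax A"
    unfolding dmax_def degree_def by (rule Max_ge) auto
  finally show ?thesis .
qed

lemma step_size_row_sum_topo_lt_1:
  assumes "\<forall>x y. 0 \<le> A$x$y" and "0 < h" and "h < 1 / dmax A"
  shows "h * (\<Sum>k\<in>UNIV. topo sc a1 a2 A i $x$k) < 1"
proof -
  have "0 < 1 / dmax A"
    using assms(2,3) by linarith
  then have "h * dmax A < 1"
    using assms(3) by (simp add: pos_less_divide_eq)
  then show ?thesis
    using mult_left_mono[OF row_sum_topo_le_dmax[OF assms(1)] less_imp_le[OF assms(2)]]
    by (rule le_less_trans[rotated])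
qed

theorem theorem2:
  fixes M :: "'w measure" and \<sigma> :: "nat \<Rightarrow> 'w \<Rightarrow> nat"
    and A :: "real^'n^'n" and a1 a2 :: 'n and sc :: scenario
    and p :: "nat \<Rightarrow> real" and h :: real and kbar :: nat
  assumes "CARD('n) \<ge> 3"
    and "simple_graph_adj A" and "connected_graph A"
    and "a1 \<noteq> a2"
    and "\<forall>i\<in>{1..4}. 0 < p i \<and> p i < 1" and "p 1 + p 2 + p 3 + p 4 = 1"
    and "prob_space M"
    and "prob_space.indep_vars M (\<lambda>_. count_space UNIV) \<sigma> UNIV"
    and "\<forall>k i. i \<in> {1..4} \<longrightarrow> measure M {\<omega> \<in> space M. \<sigma> k \<omega> = i} = p i"
    and "0 < h" and "h < 1 / dmax A" and "kbar \<ge> 1"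
    and "strongly_connected (expected_graph sc a1 a2 A p)"
  shows
    "(\<forall>x0 :: real^'n. \<forall>\<epsilon>>0.
       (\<lambda>k. measure M {\<omega> \<in> space M.
          spread (traj (\<lambda>i. mpow (mat 1 - h *\<^sub>R lap (topo sc a1 a2 A i)) kbar) x0
                       (\<lambda>j. \<sigma> j \<omega>) k) \<ge> \<epsilon>}) \<longlonglongrightarrow> 0)
     \<and> (\<forall>x0 :: real^'n. \<forall>\<epsilon>>0.
       (\<lambda>k. measure M {\<omega> \<in> space M.
          spread (traj (\<lambda>i. mexp (- ((real kbar * h) *\<^sub>R lap (topo sc a1 a2 A i)))) x0
                       (\<lambda>j. \<sigma> j \<omega>) k) \<ge> \<epsilon>}) \<longlonglongrightarrow> 0)"
proof -
  interpret prob_space M by fact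
  have A: "\<forall>x y. 0 \<le> A$x$y" using assms(2) by (rule simple_graph_adj_nonneg)
  have A_conn: "strongly_connected A" using assms(3) by (simp add: connected_graph_def)
  have h_row: "h * (\<Sum>k\<in>UNIV. topo sc a1 a2 A i $x$k) < 1" for i x
    using A assms(10,11) by (rule step_size_row_sum_topo_lt_1)
  have q: "\<And>k. prob {\<omega> \<in> space M. \<sigma> k \<omega> = 4} = p 4" and "0 < p 4"
    using assms(5,9) by auto
  have topo4: "topo sc a1 a2 A 4 = A" by (simp add: topo_def)
  obtain N where "0 < N"
    and euler_pos: "\<forall>i j. 0 < mpow (mpow (mat 1 - h *\<^sub>R lap (topo sc a1 a2 A 4)) kbar) N $i$j"
    using mpow_identity_minus_lap_positive[OF A A_conn assms(10) h_row[of 4, unfolded topo4] assms(12)]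
    unfolding topo4 by blast
  have euler_stoch: "stochastic (mpow (mat 1 - h *\<^sub>R lap (topo sc a1 a2 A i)) kbar)" for i
    using stochastic_identity_minus_lap[OF topo_nonneg[OF A] _ less_imp_le[OF h_row]] assms(10)
    by (simp add: stochastic_mpow)
  have "0 < real kbar * h" using assms(10,12) by simp
  then have exp_pos: "\<forall>i j. 0 < mpow (mexp (- ((real kbar * h) *\<^sub>R lap (topo sc a1 a2 A 4)))) 1 $i$j"
    by (simp add: topo4 mexp_neg_lap_positive[OF A A_conn])
  have exp_stoch: "stochastic (mexp (- ((real kbar * h) *\<^sub>R lap (topo sc a1 a2 A i))))" for i
    using stochastic_mexp_neg_lap[OF topo_nonneg[OF A]] \<open>0 < real kbar * h\<close> by simp
  note euler = consensus_in_probability[where F="\<lambda>i. mpow (mat 1 - h *\<^sub>R lap (topo sc a1 a2 A i)) kbar",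
      OF assms(8) q \<open>0 < p 4\<close> euler_stoch euler_pos \<open>0 < N\<close>]
  note exponential = consensus_in_probability[where F="\<lambda>i. mexp (- ((real kbar * h) *\<^sub>R lap (topo sc a1 a2 A i)))",
      OF assms(8) q \<open>0 < p 4\<close> exp_stoch exp_pos zero_less_one]
  show ?thesis
    by (intro conjI allI impI) (erule euler, erule exponential)
qed

end
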